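(* Let $k\ge 2$ and let $\mathbf{x}_1,\ldots,\mathbf{x}_k$ be norm one vectors in a real Hilbert space $\mathcal H$ with $\dim(\operatorname{span}\{\mathbf{x}_1,\ldots,\mathbf{x}_k\})=2$. If $S,T\in\mathcal L_s(^k\mathcal H)$ have norm one and $S(\mathbf{x}_1,\ldots,\mathbf{x}_k)=T(\mathbf{x}_1,\ldots,\mathbf{x}_k)=1$, then, setting $\mathcal H_1=\operatorname{span}\{\mathbf{x}_1,\ldots,\mathbf{x}_k\}$, the restrictions of $S$ and $T$ to $\mathcal H_1\times\cdots\times\mathcal H_1$ coincide.
   Context: $\mathcal L_s(^k\mathcal H)$ is the Banach space of continuous symmetric real-valued $k$-linear forms on $\mathcal H$ with norm $\|T\|=\sup\{|T(\mathbf{w}_1,\ldots,\mathbf{w}_k)|:\|\mathbf{w}_i\|\le1\}$. *)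

theory Defs
  imports "HOL-Analysis.Analysis"
begin

text \<open>A k-linear form on H is modelled as a real-valued function of a family
  w :: nat => H, of which only the entries w 0, ..., w (k-1) matter.\<close>

definition klinear :: "nat \<Rightarrow> ((nat \<Rightarrow> 'a::real_vector) \<Rightarrow> real) \<Rightarrow> bool" where
  "klinear k T \<longleftrightarrow>
     (\<forall>w w'. (\<forall>i<k. w i = w' i) \<longrightarrow> T w = T w') \<and>
     (\<forall>i<k. \<forall>w. linear (\<lambda>x. T (w(i := x))))"

definition ksymmetric :: "nat \<Rightarrow> ((nat \<Rightarrow> 'a) \<Rightarrow> real) \<Rightarrow> bool" where
  "ksymmetric k T \<longleftrightarrow> (\<forall>\<sigma> w. \<sigma> permutes {..<k} \<longrightarrow> T (w \<circ> \<sigma>) = T w)"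

text \<open>Continuous symmetric k-linear forms; continuity w.r.t. the product topology
  on families (T only depends on the first k entries, so this is continuity on H^k).\<close>
definition Ls :: "nat \<Rightarrow> ((nat \<Rightarrow> 'a::real_normed_vector) \<Rightarrow> real) set" where
  "Ls k = {T. klinear k T \<and> ksymmetric k T \<and> continuous_on UNIV T}"

definition mlnorm :: "nat \<Rightarrow> ((nat \<Rightarrow> 'a::real_normed_vector) \<Rightarrow> real) \<Rightarrow> real" where
  "mlnorm k T = Sup {\<bar>T w\<bar> | w. \<forall>i<k. norm (w i) \<le> 1}"

end

(*
  On H1 = span {x 0, ..., x (k - 1)} the forms S and T are contractive symmetric k-linear forms
  normed at x, i.e. |S w| <= prod_i |w i| and S x = 1.  The Hilbert norm is smooth at unit
  vectors, so the functional y |-> S (x with slot i replaced by y), which touches the norm at x i,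
  equals <x i, y>.  For k = 2 this determines S on H1 x H1, as two non-parallel x i span H1.
  For k > 2 freeze one slot at x m: if the remaining entries still contain a non-parallel pair,
  S (x m, -) and T (x m, -) agree on H1 by induction, and S = T follows as soon as this holds for
  two independent frozen vectors.  With a third index l these are found among x i, x j and the
  bisector (x i + x j) / |x i + x j|, which is again normed by S once it replaces both x i and x j.
*)
theory Submission
  imports Defs
begin

(* Only transpositions are required to act trivially: this is what survives freezing a slot. *)
definition contractive_symform :: "nat \<Rightarrow> ((nat \<Rightarrow> 'a::real_normed_vector) \<Rightarrow> real) \<Rightarrow> bool" where
  "contractive_symform k S \<longleftrightarrow> klinear k S \<and>
     (\<forall>i<k. \<forall>j<k. \<forall>w. S (w \<circ> Transposition.transpose i j) = S w) \<and>
     (\<forall>w. \<bar>S w\<bar> \<le> (\<Prod>i<k. norm (w i)))"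

definition agree_on :: "nat \<Rightarrow> 'a set \<Rightarrow> ((nat \<Rightarrow> 'a) \<Rightarrow> real) \<Rightarrow> ((nat \<Rightarrow> 'a) \<Rightarrow> real) \<Rightarrow> bool" where
  "agree_on k P S T \<longleftrightarrow> (\<forall>w. (\<forall>i<k. w i \<in> P) \<longrightarrow> S w = T w)"

abbreviation freeze :: "((nat \<Rightarrow> 'a) \<Rightarrow> real) \<Rightarrow> 'a \<Rightarrow> (nat \<Rightarrow> 'a) \<Rightarrow> real" where
  "freeze S a \<equiv> \<lambda>w. S (case_nat a w)"

definition drop_slot :: "(nat \<Rightarrow> 'a) \<Rightarrow> nat \<Rightarrow> nat \<Rightarrow> 'a" where
  "drop_slot z m n = z (Transposition.transpose 0 m (Suc n))"

lemma real_eq_0_if_le_quadratic: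
  fixes a c :: real
  assumes le: "\<And>t. 2 * t * a \<le> t\<^sup>2 * c"
  shows "a = 0"
proof -
  have c: "c \<ge> 0"
    using le[of 1] le[of "-1"] by simp
  define t where "t = a / (c + 1)"
  have a: "a = t * (c + 1)"
    using c by (simp add: t_def)
  have "2 * t * (t * (c + 1)) \<le> t\<^sup>2 * c"
    using le[of t] by (simp add: a)
  then have "t\<^sup>2 * (c + 2) \<le> 0"
    by (simp add: power2_eq_square algebra_simps)
  then have "t = 0"
    using c by (simp add: mult_le_0_iff)
  then show ?thesis
    by (simp add: a)
qed

lemma two_mult_le_if_one_add_le_sqrt:
  fixes s q :: real
  assumes "1 + s \<le> sqrt (1 + q)" "0 \<le> q"
  shows "2 * s \<le> q"
proof (cases "1 + s \<ge> 0")
  case True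
  then have "(1 + s)\<^sup>2 \<le> 1 + q"
    using assms(1) sqrt_ge_absD by simp
  moreover have "(1 + s)\<^sup>2 = 1 + 2 * s + s\<^sup>2"
    by (simp add: power2_eq_square algebra_simps)
  ultimately show ?thesis
    using zero_le_power2[of s] by linarith
next
  case False
  then show ?thesis
    using assms(2) by linarith
qed

lemma linear_eq_inner_if_norm_attained:
  fixes f :: "'a::real_inner \<Rightarrow> real"
  assumes f: "linear f" "\<And>v. f v \<le> norm v" and a: "norm a = 1" "f a = 1"
  shows "f y = a \<bullet> y"
proof -
  define z where "z = y - (a \<bullet> y) *\<^sub>R a"
  have aa: "a \<bullet> a = 1"
    using a(1) by (simp add: norm_eq_1)
  have az: "a \<bullet> z = 0"
    using aa by (simp add: z_def inner_diff_right)
  have "2 * t * f z \<le> t\<^sup>2 * (z \<bullet> z)" for t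
  proof -
    have "1 + t * f z = f (a + t *\<^sub>R z)"
      using a(2) by (simp add: linear_add[OF f(1)] linear_scale[OF f(1)])
    also have "\<dots> \<le> norm (a + t *\<^sub>R z)"
      by (rule f(2))
    also have "\<dots> = sqrt (1 + t\<^sup>2 * (z \<bullet> z))"
      using aa az by (simp add: norm_eq_sqrt_inner inner_add_left inner_add_right inner_commute power2_eq_square)
    finally show ?thesis
      using two_mult_le_if_one_add_le_sqrt[of "t * f z"] by (simp add: mult.assoc)
  qed
  then have "f z = 0"
    by (rule real_eq_0_if_le_quadratic)
  moreover have "f y = f z + a \<bullet> y"
    using a(2) by (simp add: z_def linear_diff[OF f(1)] linear_scale[OF f(1)])
  ultimately show ?thesis
    by simp
qed

lemma collinear_0_add_iff: "collinear {0, a, a + b} \<longleftrightarrow> collinear {0, a, b}"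
proof -
  have "collinear {0, a, a + b} \<longleftrightarrow> collinear {a + b, a, 0}"
    by (metis insert_commute)
  also have "\<dots> \<longleftrightarrow> collinear {0, b, (-1) *\<^sub>R a}"
    by (subst collinear_3) simp_all
  also have "\<dots> \<longleftrightarrow> collinear {0, b, a}"
    using collinear_scaleR_iff[of 1 b "-1" a] by simp
  finally show ?thesis
    by (metis insert_commute)
qed

lemma collinear_0_sgn_iff:
  fixes a v :: "'a::real_normed_vector"
  shows "collinear {0, a, sgn v} \<longleftrightarrow> collinear {0, a, v}"
  using collinear_scaleR_iff[of 1 a "inverse (norm v)" v]
  by (cases "v = 0") (simp_all add: sgn_div_norm)

lemma not_collinear_sgn_add:
  fixes a b :: "'a::real_normed_vector"
  assumes "\<not> collinear {0, a, b}"
  shows "\<not> collinear {0, a, sgn (a + b)}" "\<not> collinear {0, b, sgn (a + b)}"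
  using assms collinear_0_add_iff[of a b] collinear_0_add_iff[of b a]
  by (simp_all add: collinear_0_sgn_iff add.commute) (metis insert_commute)

lemma add_neq_0_if_not_collinear:
  assumes "\<not> collinear {0, a, b}"
  shows "a + b \<noteq> 0"
proof
  assume "a + b = 0"
  then have "b = (-1) *\<^sub>R a"
    by (simp add: add_eq_0_iff)
  then show False
    using assms collinear_lemma by blast
qed

lemma collinear_0_trans:
  assumes "collinear {0, a, c}" "collinear {0, c, b}" "c \<noteq> 0"
  shows "collinear {0, a, b}"
  using collinear_3_trans[of a 0 c b] assms by (simp add: insert_commute)

lemma obtain_not_collinear_pair:
  assumes "\<not> collinear (insert 0 (x ` I))"
  obtains i j where "i \<in> I" "j \<in> I" "\<not> collinear {0, x i, x j}"
proof -
  obtain i where i: "i \<in> I" "x i \<noteq> 0"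
    using assms collinear_subset[of "{0}" "insert 0 (x ` I)"] by fastforce
  then have "insert 0 (x ` I) = insert 0 (insert (x i) (x ` I))"
    by blast
  then show ?thesis
    using assms collinear_triples[of 0 "x i" "x ` I"] i that by auto
qed

lemma dim_span_le_1_if_collinear:
  assumes "collinear (insert 0 X)"
  shows "dim (span X) \<le> 1"
proof -
  obtain u where "\<forall>a\<in>insert 0 X. \<forall>b\<in>insert 0 X. \<exists>c. a - b = c *\<^sub>R u"
    using assms unfolding collinear_def by blast
  then have "X \<subseteq> span {u}"
    by (force simp: span_singleton)
  then have "dim X \<le> card {u}"
    by (intro dim_le_card) auto
  then show ?thesis
    by simp
qed

lemma span_pair_if_not_collinear:
  assumes P: "subspace P" "dim P = 2" and ab: "a \<in> P" "b \<in> P" "\<not> collinear {0, a, b}"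
    and v: "v \<in> P"
  obtains \<alpha> \<beta> where "v = \<alpha> *\<^sub>R a + \<beta> *\<^sub>R b"
proof -
  have "a \<noteq> b" "b \<noteq> 0"
    using ab(3) by (auto simp: insert_commute)
  moreover have "a \<notin> span {b}"
    using ab(3) collinear_lemma[of b a] by (auto simp: span_singleton insert_commute)
  ultimately have ind: "independent {a, b}"
    by (simp add: independent_insert)
  have "v \<in> span {a, b}"
  proof (rule ccontr)
    assume v_notin: "v \<notin> span {a, b}"
    then have "independent {v, a, b}" "card {v, a, b} = 3"
      using ind \<open>a \<noteq> b\<close> span_base[of a "{a, b}"] span_base[of b "{a, b}"]
      by (auto simp: independent_insert card_insert_if)
    obtain B where B: "independent B" "P \<subseteq> span B" "card B = 2"
      using basis_exists[of P] P(2) by metis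
    have "finite B"
      using B(3) card.infinite by fastforce
    have "{v, a, b} \<subseteq> span B"
      using B(2) ab v by auto
    then have "card {v, a, b} \<le> card B"
      using independent_span_bound[OF \<open>finite B\<close> \<open>independent {v, a, b}\<close>] by blast
    then show False
      using \<open>card {v, a, b} = 3\<close> B(3) by simp
  qed
  then obtain \<alpha> \<beta> where "v - \<alpha> *\<^sub>R a = \<beta> *\<^sub>R b"
    by (auto simp: span_breakdown_eq span_singleton)
  then show ?thesis
    using that[of \<alpha> \<beta>] by (simp add: algebra_simps)
qed

lemma open_fun_obtain_box:
  fixes U :: "('i \<Rightarrow> 'a::metric_space) set"
  assumes "open U" "x \<in> U"
  obtains r where "\<And>i. r i > 0" "\<And>y. (\<And>i. dist (y i) (x i) < r i) \<Longrightarrow> y \<in> U"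
proof -
  obtain V where V: "\<forall>i\<in>UNIV. openin euclidean (V i)" "x \<in> Pi\<^sub>E UNIV V" "Pi\<^sub>E UNIV V \<subseteq> U"
    using assms unfolding open_fun_def openin_product_topology_alt by meson
  then have "\<exists>\<epsilon>>0. ball (x i) \<epsilon> \<subseteq> V i" for i
    using open_contains_ball_eq[of "V i" "x i"] by (simp add: PiE_iff)
  then obtain r where r: "\<And>i. r i > 0" "\<And>i. ball (x i) (r i) \<subseteq> V i"
    by metis
  have "y \<in> U" if "\<And>i. dist (y i) (x i) < r i" for y
    using V(3) r(2) that by (force simp: PiE_iff dist_commute)
  with r(1) show ?thesis
    using that by blast
qed

lemma case_nat_drop_slot: "case_nat (z m) (drop_slot z m) = z \<circ> Transposition.transpose 0 m"
  by (auto simp: fun_eq_iff drop_slot_def split: nat.splits)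

lemma drop_slot_image:
  assumes "m < Suc k"
  shows "drop_slot z m ` {..<k} = z ` ({..<Suc k} - {m})"
proof -
  have slots: "Transposition.transpose 0 m ` Suc ` {..<k} = {..<Suc k} - {m}"
  proof -
    have "Transposition.transpose 0 m permutes {..<Suc k}"
      using assms by (intro permutes_swap_id) auto
    then have "Transposition.transpose 0 m ` ({..<Suc k} - {0}) = {..<Suc k} - {m}"
      by (simp add: image_set_diff permutes_inj permutes_image)
    moreover have "Suc ` {..<k} = {..<Suc k} - {0}"
      by (auto simp: lessThan_Suc_eq_insert_0)
    ultimately show ?thesis
      by simp
  qed
  have "drop_slot z m ` {..<k} = z ` Transposition.transpose 0 m ` Suc ` {..<k}"
    by (simp add: drop_slot_def image_image)
  also have "\<dots> = z ` ({..<Suc k} - {m})"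
    by (simp only: slots)
  finally show ?thesis .
qed

lemma klinear_cong: "klinear k S \<Longrightarrow> (\<And>i. i < k \<Longrightarrow> w i = w' i) \<Longrightarrow> S w = S w'"
  unfolding klinear_def by blast

lemma klinear_slot_linear: "klinear k S \<Longrightarrow> i < k \<Longrightarrow> linear (\<lambda>y. S (w(i := y)))"
  unfolding klinear_def by blast

lemma klinear_slot_add_scale:
  assumes "klinear k S" "i < k"
  shows "S (w(i := a *\<^sub>R y + b *\<^sub>R z)) = a * S (w(i := y)) + b * S (w(i := z))"
  using linear_add[OF klinear_slot_linear[OF assms]] linear_cmul[OF klinear_slot_linear[OF assms]]
  by simp

lemma klinear_scale_slots:
  assumes "klinear k S" "m \<le> k"
  shows "S (\<lambda>i. if i < m then c i *\<^sub>R w i else w i) = (\<Prod>i<m. c i) * S w"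
  using assms(2)
proof (induction m)
  case 0
  then show ?case by simp
next
  case (Suc m)
  define W where "W = (\<lambda>i. if i < m then c i *\<^sub>R w i else w i)"
  have "(\<lambda>i. if i < Suc m then c i *\<^sub>R w i else w i) = W(m := c m *\<^sub>R W m)"
    by (auto simp: fun_eq_iff W_def)
  moreover have "S (W(m := c m *\<^sub>R W m)) = c m * S W"
    using linear_cmul[OF klinear_slot_linear[OF assms(1)], of m W "c m" "W m"] Suc.prems by simp
  ultimately show ?case using Suc by (simp add: W_def)
qed

lemma klinear_abs_le_prod_norm:
  assumes S: "klinear k S" and unit_ball: "\<And>w. \<forall>i<k. norm (w i) \<le> 1 \<Longrightarrow> \<bar>S w\<bar> \<le> M"
  shows "\<bar>S w\<bar> \<le> M * (\<Prod>i<k. norm (w i))"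
proof -
  have "norm x *\<^sub>R sgn x = x" for x :: 'a
    by (cases "x = 0") (simp_all add: sgn_div_norm)
  then have "S w = S (\<lambda>i. if i < k then norm (w i) *\<^sub>R sgn (w i) else sgn (w i))"
    by (intro klinear_cong[OF S]) simp
  also have "\<dots> = (\<Prod>i<k. norm (w i)) * S (\<lambda>i. sgn (w i))"
    by (rule klinear_scale_slots[OF S order_refl])
  finally have "\<bar>S w\<bar> = (\<Prod>i<k. norm (w i)) * \<bar>S (\<lambda>i. sgn (w i))\<bar>"
    by (simp add: abs_mult prod_nonneg)
  also have "\<dots> \<le> (\<Prod>i<k. norm (w i)) * M"
    by (intro mult_left_mono unit_ball) (auto simp: norm_sgn prod_nonneg)
  finally show ?thesis by (simp add: mult.commute)
qed

lemma klinear_freeze: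
  assumes "klinear (Suc k) S"
  shows "klinear k (freeze S a)"
  unfolding klinear_def
proof (intro conjI allI impI)
  fix w w' :: "nat \<Rightarrow> 'a"
  assume "\<forall>i<k. w i = w' i"
  then show "S (case_nat a w) = S (case_nat a w')"
    by (intro klinear_cong[OF assms]) (auto simp: less_Suc_eq_0_disj)
next
  fix i w
  assume "i < k"
  have "case_nat a (w(i := y)) = (case_nat a w)(Suc i := y)" for y
    by (auto simp: fun_eq_iff split: nat.splits)
  then show "linear (\<lambda>y. S (case_nat a (w(i := y))))"
    using klinear_slot_linear[OF assms, of "Suc i"] \<open>i < k\<close> by simp
qed

lemma klinear_continuous_small_near_0:
  assumes S: "klinear k S" "continuous_on UNIV S" and k: "1 \<le> k"
  obtains e where "e > 0" "\<And>v. \<forall>i<k. norm (v i) \<le> e \<Longrightarrow> \<bar>S v\<bar> < 1"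
proof -
  have "S (\<lambda>_. 0) = 0"
    using linear_0[OF klinear_slot_linear[OF S(1), of 0 "\<lambda>_. 0"]] k by (simp add: fun_upd_def)
  then have "(\<lambda>_. 0) \<in> S -` {-1<..<1}"
    by simp
  moreover have "open (S -` {-1<..<1})"
    by (rule open_vimage) (use S(2) in auto)
  ultimately obtain r where r: "\<And>i. r i > 0"
    "\<And>v. (\<And>i. dist (v i) 0 < r i) \<Longrightarrow> v \<in> S -` {-1<..<1}"
    using open_fun_obtain_box by blast
  define e where "e = Min (r ` {..<k}) / 2"
  have Min_pos: "0 < Min (r ` {..<k})"
    using r(1) k by (simp add: Min_gr_iff lessThan_empty_iff)
  then have "e > 0"
    by (simp add: e_def)
  have e_lt: "e < r i" if "i < k" for i
  proof -
    have "Min (r ` {..<k}) \<le> r i"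
      using that by (intro Min_le) auto
    then show ?thesis
      using Min_pos unfolding e_def by linarith
  qed
  have "\<bar>S v\<bar> < 1" if v: "\<forall>i<k. norm (v i) \<le> e" for v
  proof -
    have "S v = S (\<lambda>i. if i < k then v i else 0)"
      by (rule klinear_cong[OF S(1)]) simp
    moreover have "(\<lambda>i. if i < k then v i else 0) \<in> S -` {-1<..<1}"
      using v e_lt r(1) by (intro r(2)) (force simp: dist_norm)
    ultimately show ?thesis
      by (simp add: abs_less_iff)
  qed
  with \<open>e > 0\<close> show ?thesis
    using that by blast
qed

lemma Ls_abs_le_mlnorm:
  assumes "S \<in> Ls k" "1 \<le> k"
  shows "\<bar>S w\<bar> \<le> mlnorm k S * (\<Prod>i<k. norm (w i))"
proof -
  have S: "klinear k S" "continuous_on UNIV S"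
    using assms(1) by (auto simp: Ls_def)
  obtain e where e: "e > 0" "\<And>v. \<forall>i<k. norm (v i) \<le> e \<Longrightarrow> \<bar>S v\<bar> < 1"
    using klinear_continuous_small_near_0[OF S assms(2)] by blast
  have "\<bar>S w\<bar> \<le> 1 / e ^ k" if "\<forall>i<k. norm (w i) \<le> 1" for w
  proof -
    have "S (\<lambda>i. if i < k then e *\<^sub>R w i else w i) = e ^ k * S w"
      using klinear_scale_slots[OF S(1) order_refl, of "\<lambda>_. e"] by simp
    moreover have "\<bar>S (\<lambda>i. if i < k then e *\<^sub>R w i else w i)\<bar> < 1"
      using that \<open>e > 0\<close> by (intro e(2)) (simp add: mult_left_le)
    ultimately show ?thesis
      using \<open>e > 0\<close> by (simp add: abs_mult field_simps)
  qed
  then have "bdd_above {\<bar>S w\<bar> | w. \<forall>i<k. norm (w i) \<le> 1}"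
    by (intro bdd_aboveI) blast
  then have "\<bar>S w\<bar> \<le> mlnorm k S" if "\<forall>i<k. norm (w i) \<le> 1" for w
    unfolding mlnorm_def using that by (intro cSup_upper) auto
  then show ?thesis
    by (rule klinear_abs_le_prod_norm[OF S(1)])
qed

lemma contractive_symformD:
  assumes "contractive_symform k S"
  shows "klinear k S" "i < k \<Longrightarrow> j < k \<Longrightarrow> S (w \<circ> Transposition.transpose i j) = S w"
    "\<bar>S w\<bar> \<le> (\<Prod>i<k. norm (w i))"
  using assms unfolding contractive_symform_def by blast+

lemma contractive_symform_if_Ls:
  assumes "S \<in> Ls k" "mlnorm k S = 1" "1 \<le> k"
  shows "contractive_symform k S"
  using assms Ls_abs_le_mlnorm[OF assms(1,3)]
  by (auto simp: contractive_symform_def Ls_def ksymmetric_def intro: permutes_swap_id)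

lemma contractive_symform_update_slot:
  fixes x :: "nat \<Rightarrow> 'a::real_inner"
  assumes S: "contractive_symform k S" and x: "\<forall>i<k. norm (x i) = 1" "S x = 1" and i: "i < k"
  shows "S (x(i := y)) = x i \<bullet> y"
proof (rule linear_eq_inner_if_norm_attained)
  show "linear (\<lambda>y. S (x(i := y)))"
    using klinear_slot_linear[OF contractive_symformD(1)[OF S] i] .
  show "S (x(i := v)) \<le> norm v" for v
  proof -
    have "S (x(i := v)) \<le> (\<Prod>j<k. norm ((x(i := v)) j))"
      using contractive_symformD(3)[OF S] abs_le_D1 by blast
    also have "\<dots> = norm v * (\<Prod>j\<in>{..<k} - {i}. norm (x j))"
      using i by (simp add: prod.remove[of _ i])
    also have "\<dots> = norm v"
      using x(1) by (simp add: prod.neutral)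
    finally show ?thesis .
  qed
qed (use x i in auto)

lemma contractive_symform_update_two_slots:
  fixes x :: "nat \<Rightarrow> 'a::real_inner"
  assumes S: "contractive_symform k S" and x: "\<forall>i<k. norm (x i) = 1" "S x = 1"
    and ij: "i < k" "j < k" "i \<noteq> j"
  shows "S (x(i := a *\<^sub>R x i + b *\<^sub>R x j, j := q)) = a * (x j \<bullet> q) + b * (x i \<bullet> q)"
proof -
  have "S (x(i := a *\<^sub>R x i + b *\<^sub>R x j, j := q)) = a * S (x(j := q)) + b * S (x(j := q, i := x j))"
    using klinear_slot_add_scale[OF contractive_symformD(1)[OF S] ij(1), of "x(j := q)"] ij(3)
    by (simp add: fun_upd_twist)
  moreover have "x(j := q, i := x j) = x(i := q) \<circ> Transposition.transpose i j"
    using ij(3) by (auto simp: fun_eq_iff Transposition.transpose_def)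
  ultimately show ?thesis
    using contractive_symformD(2)[OF S ij(1,2)] contractive_symform_update_slot[OF S x] ij by simp
qed

lemma contractive_symform_bisector:
  fixes x :: "nat \<Rightarrow> 'a::real_inner"
  assumes S: "contractive_symform k S" and x: "\<forall>i<k. norm (x i) = 1" "S x = 1"
    and ij: "i < k" "j < k" "i \<noteq> j" and nz: "x i + x j \<noteq> 0"
  shows "S (x(i := sgn (x i + x j), j := sgn (x i + x j))) = 1"
proof -
  define u where "u = sgn (x i + x j)"
  define s where "s = 1 / norm (x i + x j)"
  have u: "u = s *\<^sub>R x i + s *\<^sub>R x j"
    by (simp add: u_def s_def sgn_div_norm divide_inverse_commute scaleR_add_right)
  have "S (x(i := u, j := u)) = S (x(i := s *\<^sub>R x i + s *\<^sub>R x j, j := u))"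
    by (simp only: u)
  also have "\<dots> = s * (x j \<bullet> u) + s * (x i \<bullet> u)"
    by (rule contractive_symform_update_two_slots[OF S x ij])
  also have "\<dots> = s * ((x i + x j) \<bullet> u)"
    by (simp add: inner_add_left algebra_simps)
  also have "\<dots> = 1"
    using nz by (simp add: u_def s_def sgn_div_norm power2_norm_eq_inner[symmetric] power2_eq_square)
  finally show ?thesis
    by (simp only: u_def)
qed

lemma contractive_symform_freeze:
  assumes S: "contractive_symform (Suc k) S" and a: "norm a = 1"
  shows "contractive_symform k (freeze S a)"
  unfolding contractive_symform_def
proof (intro conjI allI impI)
  show "klinear k (freeze S a)"
    by (rule klinear_freeze[OF contractive_symformD(1)[OF S]])
  fix w :: "nat \<Rightarrow> 'a"
  show "\<bar>S (case_nat a w)\<bar> \<le> (\<Prod>i<k. norm (w i))"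
    using contractive_symformD(3)[OF S, of "case_nat a w"] a
    by (simp add: prod.lessThan_Suc_shift del: prod.lessThan_Suc)
  fix i j
  assume "i < k" "j < k"
  moreover have "case_nat a (w \<circ> Transposition.transpose i j)
      = case_nat a w \<circ> Transposition.transpose (Suc i) (Suc j)"
    by (auto simp: fun_eq_iff Transposition.transpose_def split: nat.splits)
  ultimately show "S (case_nat a (w \<circ> Transposition.transpose i j)) = S (case_nat a w)"
    using contractive_symformD(2)[OF S] by simp
qed

lemma contractive_symform_freeze_slot:
  assumes S: "contractive_symform (Suc k) S" and z: "\<forall>i<Suc k. norm (z i) = 1" "S z = 1"
    and m: "m < Suc k"
  shows "contractive_symform k (freeze S (z m))" "freeze S (z m) (drop_slot z m) = 1"
proof -
  show "contractive_symform k (freeze S (z m))"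
    using contractive_symform_freeze[OF S] z(1) m by blast
  show "freeze S (z m) (drop_slot z m) = 1"
    using contractive_symformD(2)[OF S, of 0 m z] z(2) m by (simp add: case_nat_drop_slot)
qed

lemma agree_on_Suc_if_agree_on_freeze:
  fixes S T :: "(nat \<Rightarrow> 'a::real_vector) \<Rightarrow> real"
  assumes P: "subspace P" "dim P = 2" and S: "klinear (Suc k) S" and T: "klinear (Suc k) T"
    and ab: "a \<in> P" "b \<in> P" "\<not> collinear {0, a, b}"
    and agree_a: "agree_on k P (freeze S a) (freeze T a)"
    and agree_b: "agree_on k P (freeze S b) (freeze T b)"
  shows "agree_on (Suc k) P S T"
  unfolding agree_on_def
proof (intro allI impI)
  fix w :: "nat \<Rightarrow> 'a"
  assume w: "\<forall>i<Suc k. w i \<in> P"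
  obtain \<alpha> \<beta> where w0: "w 0 = \<alpha> *\<^sub>R a + \<beta> *\<^sub>R b"
    using span_pair_if_not_collinear[OF P ab] w by blast
  define w' where "w' n = w (Suc n)" for n
  have w': "\<forall>i<k. w' i \<in> P"
    using w by (simp add: w'_def)
  have split: "R w = \<alpha> * freeze R a w' + \<beta> * freeze R b w'" if "klinear (Suc k) R" for R
  proof -
    have "w = (case_nat a w')(0 := \<alpha> *\<^sub>R a + \<beta> *\<^sub>R b)"
      using w0 by (auto simp: fun_eq_iff w'_def split: nat.splits)
    moreover have "(case_nat a w')(0 := c) = case_nat c w'" for c
      by (auto simp: fun_eq_iff split: nat.splits)
    ultimately show ?thesis
      using klinear_slot_add_scale[OF that, of 0 "case_nat a w'" \<alpha> a \<beta> b] by simp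
  qed
  have "S w = \<alpha> * freeze S a w' + \<beta> * freeze S b w'"
    by (rule split[OF S])
  also have "\<dots> = \<alpha> * freeze T a w' + \<beta> * freeze T b w'"
    using agree_a agree_b w' by (simp add: agree_on_def)
  also have "\<dots> = T w"
    by (rule split[OF T, symmetric])
  finally show "S w = T w" .
qed

lemma contractive_symforms_agree_2:
  fixes x :: "nat \<Rightarrow> 'a::real_inner"
  assumes P: "subspace P" "dim P = 2"
    and S: "contractive_symform 2 S" and T: "contractive_symform 2 T"
    and x: "\<forall>i<2. x i \<in> P \<and> norm (x i) = 1" "\<not> collinear {0, x 0, x 1}"
    and Sx: "S x = 1" and Tx: "T x = 1"
  shows "agree_on 2 P S T"
  unfolding agree_on_def
proof (intro allI impI)
  fix w :: "nat \<Rightarrow> 'a"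
  assume w: "\<forall>i<2. w i \<in> P"
  have "x 0 \<in> P" "x 1 \<in> P" "w 0 \<in> P"
    using x(1) w by auto
  then obtain \<alpha> \<beta> where w0: "w 0 = \<alpha> *\<^sub>R x 0 + \<beta> *\<^sub>R x 1"
    using span_pair_if_not_collinear[OF P _ _ x(2)] by metis
  have expand: "R w = \<alpha> * (x 1 \<bullet> w 1) + \<beta> * (x 0 \<bullet> w 1)"
    if R: "contractive_symform 2 R" "R x = 1" for R
  proof -
    have "R w = R (x(0 := \<alpha> *\<^sub>R x 0 + \<beta> *\<^sub>R x 1, 1 := w 1))"
      by (rule klinear_cong[OF contractive_symformD(1)[OF R(1)]]) (auto simp: w0 less_2_cases_iff)
    also have "\<dots> = \<alpha> * (x 1 \<bullet> w 1) + \<beta> * (x 0 \<bullet> w 1)"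
      by (rule contractive_symform_update_two_slots[OF R(1) _ R(2)]) (use x(1) in auto)
    finally show ?thesis .
  qed
  show "S w = T w"
    using expand[OF S Sx] expand[OF T Tx] by simp
qed

context
  fixes P :: "'a::real_inner set" and k :: nat and S T :: "(nat \<Rightarrow> 'a) \<Rightarrow> real"
  assumes P: "subspace P" "dim P = 2"
    and S: "contractive_symform (Suc k) S" and T: "contractive_symform (Suc k) T"
    \<comment> \<open>the induction hypothesis, applied to S and T with slot m frozen at z m\<close>
    and agree_on_freeze: "\<And>z m p q. \<forall>i<Suc k. z i \<in> P \<and> norm (z i) = 1 \<Longrightarrow>
      S z = 1 \<Longrightarrow> T z = 1 \<Longrightarrow> m < Suc k \<Longrightarrow>
      p < Suc k \<Longrightarrow> q < Suc k \<Longrightarrow> p \<noteq> m \<Longrightarrow> q \<noteq> m \<Longrightarrow> \<not> collinear {0, z p, z q} \<Longrightarrow>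
      agree_on k P (freeze S (z m)) (freeze T (z m))"
begin

lemma agree_on_Suc_if_third_slot:
  fixes x :: "nat \<Rightarrow> 'a"
  assumes x: "\<forall>i<Suc k. x i \<in> P \<and> norm (x i) = 1" and Sx: "S x = 1" and Tx: "T x = 1"
    and ijl: "i < Suc k" "j < Suc k" "l < Suc k" "l \<noteq> i" "l \<noteq> j"
    and ij: "\<not> collinear {0, x i, x j}" and il: "\<not> collinear {0, x i, x l}"
  shows "agree_on (Suc k) P S T"
proof -
  have "i \<noteq> j"
    using ij by auto
  have xP: "x n \<in> P" "x n \<noteq> 0" if "n < Suc k" for n
    using x that by auto
  have agree_j: "agree_on k P (freeze S (x j)) (freeze T (x j))"
    by (rule agree_on_freeze[OF x Sx Tx, of j i l]) (use ijl \<open>i \<noteq> j\<close> il in auto)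
  have klin: "klinear (Suc k) S" "klinear (Suc k) T"
    using S T by (simp_all add: contractive_symformD)
  show ?thesis
  proof (cases "collinear {0, x j, x l}")
    case False
    have "agree_on k P (freeze S (x i)) (freeze T (x i))"
      by (rule agree_on_freeze[OF x Sx Tx, of i j l]) (use ijl \<open>i \<noteq> j\<close> False in auto)
    then show ?thesis
      by (rule agree_on_Suc_if_agree_on_freeze[OF P klin xP(1)[OF ijl(1)] xP(1)[OF ijl(2)] ij _ agree_j])
  next
    case True
    \<comment> \<open>As x l is parallel to x j, freezing x i need not leave an independent pair; freeze u instead.\<close>
    define u where "u = sgn (x i + x j)"
    define z where "z = x(i := u, j := u)"
    have "x i + x j \<noteq> 0"
      by (rule add_neq_0_if_not_collinear[OF ij])
    then have u: "u \<in> P" "norm u = 1"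
      using P(1) xP ijl by (simp_all add: u_def sgn_div_norm norm_sgn subspace_add subspace_scale)
    have z: "\<forall>n<Suc k. z n \<in> P \<and> norm (z n) = 1"
      using x u by (simp add: z_def)
    have Sz: "S z = 1" and Tz: "T z = 1"
      unfolding z_def u_def
      using contractive_symform_bisector[OF _ _ _ ijl(1,2) \<open>i \<noteq> j\<close> \<open>x i + x j \<noteq> 0\<close>] S T x Sx Tx
      by auto
    have ju: "\<not> collinear {0, x j, u}"
      using not_collinear_sgn_add(2)[OF ij] by (simp add: u_def)
    have "collinear {0, x l, x j}" "\<not> collinear {0, u, x j}"
      using True ju by (simp_all add: insert_commute)
    then have "\<not> collinear {0, u, x l}"
      using collinear_0_trans xP(2)[OF ijl(3)] by blast
    then have "agree_on k P (freeze S (z i)) (freeze T (z i))"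
      by (intro agree_on_freeze[OF z Sz Tz, of i j l]) (use ijl \<open>i \<noteq> j\<close> in \<open>auto simp: z_def\<close>)
    then show ?thesis
      by (intro agree_on_Suc_if_agree_on_freeze[OF P klin xP(1)[OF ijl(2)] u(1) ju agree_j])
        (use \<open>i \<noteq> j\<close> in \<open>simp add: z_def\<close>)
  qed
qed

lemma agree_on_Suc:
  fixes x :: "nat \<Rightarrow> 'a"
  assumes k: "2 \<le> k" and x: "\<forall>i<Suc k. x i \<in> P \<and> norm (x i) = 1"
    and Sx: "S x = 1" and Tx: "T x = 1"
    and ij: "i < Suc k" "j < Suc k" "\<not> collinear {0, x i, x j}"
  shows "agree_on (Suc k) P S T"
proof -
  have "\<exists>l::nat. l \<le> 2 \<and> l \<noteq> i \<and> l \<noteq> j"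
    by presburger
  then obtain l where l: "l \<le> 2" "l \<noteq> i" "l \<noteq> j"
    by blast
  then have "l < Suc k"
    using k by simp
  then have "x l \<noteq> 0"
    using x by force
  then have "\<not> collinear {0, x i, x l} \<or> \<not> collinear {0, x j, x l}"
    using ij(3) collinear_0_trans[of "x i" "x l" "x j"] by (auto simp: insert_commute)
  then show ?thesis
  proof
    assume "\<not> collinear {0, x i, x l}"
    then show ?thesis
      using agree_on_Suc_if_third_slot[OF x Sx Tx ij(1,2) \<open>l < Suc k\<close>] l ij(3) by auto
  next
    assume "\<not> collinear {0, x j, x l}"
    moreover have "\<not> collinear {0, x j, x i}"
      using ij(3) by (simp add: insert_commute)
    ultimately show ?thesis
      using agree_on_Suc_if_third_slot[OF x Sx Tx ij(2,1) \<open>l < Suc k\<close>] l by auto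
  qed
qed

end

lemma contractive_symforms_agree:
  fixes x :: "nat \<Rightarrow> 'a::real_inner"
  assumes "2 \<le> k" and P: "subspace P" "dim P = 2"
    and "contractive_symform k S" "contractive_symform k T"
    and "\<forall>i<k. x i \<in> P \<and> norm (x i) = 1" "\<not> collinear (insert 0 (x ` {..<k}))"
    and "S x = 1" "T x = 1"
  shows "agree_on k P S T"
  using assms(1,4-)
proof (induction k arbitrary: S T x rule: nat_induct_at_least)
  case base
  have "insert 0 (x ` {..<2}) = {0, x 0, x 1}"
    by (auto simp: less_2_cases_iff)
  then show ?case
    using contractive_symforms_agree_2[OF P] base by simp
next
  case (Suc k)
  have freeze_agree: "agree_on k P (freeze S (z m)) (freeze T (z m))"
    if z: "\<forall>i<Suc k. z i \<in> P \<and> norm (z i) = 1" and "S z = 1" "T z = 1"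
      and m: "m < Suc k"
      and pq: "p < Suc k" "q < Suc k" "p \<noteq> m" "q \<noteq> m" "\<not> collinear {0, z p, z q}"
    for z m p q
  proof (rule Suc.IH[where x = "drop_slot z m"])
    have "\<forall>i<Suc k. norm (z i) = 1"
      using z by blast
    then show "contractive_symform k (freeze S (z m))" "contractive_symform k (freeze T (z m))"
      "freeze S (z m) (drop_slot z m) = 1" "freeze T (z m) (drop_slot z m) = 1"
      using contractive_symform_freeze_slot[OF Suc.prems(1) _ \<open>S z = 1\<close> m]
        contractive_symform_freeze_slot[OF Suc.prems(2) _ \<open>T z = 1\<close> m] by simp_all
    show "\<forall>i<k. drop_slot z m i \<in> P \<and> norm (drop_slot z m i) = 1"
    proof (intro allI impI)
      fix i
      assume "i < k"
      then have "drop_slot z m i \<in> z ` {..<Suc k}"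
        using drop_slot_image[OF m, of z] by blast
      then show "drop_slot z m i \<in> P \<and> norm (drop_slot z m i) = 1"
        using z by auto
    qed
    have "{0, z p, z q} \<subseteq> insert 0 (drop_slot z m ` {..<k})"
      using pq by (auto simp: drop_slot_image[OF m])
    then show "\<not> collinear (insert 0 (drop_slot z m ` {..<k}))"
      using pq(5) collinear_subset by blast
  qed
  obtain i j where ij: "i < Suc k" "j < Suc k" "\<not> collinear {0, x i, x j}"
    using obtain_not_collinear_pair[OF Suc.prems(4)] by blast
  show ?case
    by (rule agree_on_Suc[OF P Suc.prems(1,2) _ Suc.hyps Suc.prems(3,5,6) ij]) (fact freeze_agree)
qed

theorem lemma1p6:
  fixes x :: "nat \<Rightarrow> 'a::{real_inner, complete_space}"
    and S T :: "(nat \<Rightarrow> 'a) \<Rightarrow> real"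
    and k :: nat
  assumes "k \<ge> 2"
    and "\<forall>i<k. norm (x i) = 1"
    and "dim (span (x ` {..<k})) = 2"
    and "S \<in> Ls k" and "T \<in> Ls k"
    and "mlnorm k S = 1" and "mlnorm k T = 1"
    and "S x = 1" and "T x = 1"
  shows "\<forall>w. (\<forall>i<k. w i \<in> span (x ` {..<k})) \<longrightarrow> S w = T w"
proof -
  have "1 \<le> k"
    using assms(1) by simp
  then have "contractive_symform k S" "contractive_symform k T"
    using contractive_symform_if_Ls assms(4-7) by blast+
  moreover have "\<not> collinear (insert 0 (x ` {..<k}))"
    using dim_span_le_1_if_collinear assms(3) by fastforce
  moreover have "\<forall>i<k. x i \<in> span (x ` {..<k}) \<and> norm (x i) = 1"
    using assms(2) by (simp add: span_base)
  ultimately have "agree_on k (span (x ` {..<k})) S T"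
    using contractive_symforms_agree[OF assms(1) subspace_span assms(3)] assms(8,9) by blast
  then show ?thesis
    unfolding agree_on_def .
qed

end
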